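(* If $s\ge3$ and $s$ is odd, then $\mathrm{ex}(n,P^{(3)}_s)\ge\left(1-\frac{4}{(s-1)^2}+o(1)\right)\binom{n}{3}$, where $o(1)\to0$ as $n\to\infty$ with $s$ fixed.
   Context: An ordered $3$-uniform hypergraph is a $3$-uniform hypergraph with linearly ordered vertex set; $G$ contains $H$ if there is an order-preserving injection $f:V(H)\to V(G)$ with $f(e)\in E(G)$ for all $e\in E(H)$. $\mathrm{ex}(n,H)$ is the maximum number of edges of an $n$-vertex ordered $3$-uniform hypergraph not containing $H$. $P^{(3)}_s$ has vertices $v_1<\dots<v_s$ and edges $\{v_j,v_{j+1},v_{j+2}\}$ for $1\le j\le s-2$. *)

theory Defs
  imports "HOL-Analysis.Analysis"
begin

text \<open>An ordered 3-uniform hypergraph on n vertices: vertex set {0..<n} with the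
natural order of nat; edges are 3-element subsets of {0..<n}.
(Every ordered n-vertex hypergraph is isomorphic to one of these.)\<close>

definition hypergraph3 :: "nat \<Rightarrow> nat set set \<Rightarrow> bool" where
  "hypergraph3 n E \<longleftrightarrow> (\<forall>e\<in>E. e \<subseteq> {0..<n} \<and> card e = 3)"

definition contains_tight_path :: "nat \<Rightarrow> nat set set \<Rightarrow> bool" where
  "contains_tight_path s E \<longleftrightarrow>
     (\<exists>f::nat \<Rightarrow> nat. strict_mono_on {0..<s} f \<and>
        (\<forall>j. j + 2 < s \<longrightarrow> {f j, f (j+1), f (j+2)} \<in> E))"

definition ex_tight_path :: "nat \<Rightarrow> nat \<Rightarrow> nat" where
  "ex_tight_path n s =
     Max {card E | E. hypergraph3 n E \<and> \<not> contains_tight_path s E}"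

end

theory Submission
  imports Defs
begin

text \<open>Write \<open>s = 2k + 1\<close> and cut \<open>{0..<n}\<close> into \<open>k\<close> consecutive blocks of length \<open>L = n div k + 1\<close>.
  Keep exactly the triples that meet at least two blocks. Along a tight path
  \<open>v\<^sub>0 < \<dots> < v\<^sub>2\<^sub>k\<close> the block index is non-decreasing and takes fewer than \<open>k\<close> values, so it cannot
  increase strictly at each of the \<open>k\<close> double steps \<open>v\<^sub>j \<mapsto> v\<^sub>j\<^sub>+\<^sub>2\<close>; where it does not, the edge
  \<open>{v\<^sub>j, v\<^sub>j\<^sub>+\<^sub>1, v\<^sub>j\<^sub>+\<^sub>2}\<close> lies in one block and is missing. At most \<open>k \<cdot> (L choose 3) \<le> (n + k)\<^sup>3 / (6k\<^sup>2)\<close>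
  triples are lost, a fraction \<open>1/k\<^sup>2 + o(1) = 4/(s - 1)\<^sup>2 + o(1)\<close> of all of them.\<close>

lemma real_choose_three: "real (n choose 3) = real n * (real n - 1) * (real n - 2) / 6"
proof -
  have "real (n choose 3) = (\<Prod>i = 0..<3. (real n - of_nat i) / of_nat (3 - i))"
    by (simp add: binomial_gbinomial gbinomial_altdef_of_nat)
  then show ?thesis
    by (simp add: numeral_3_eq_3 prod.atLeast0_lessThan_Suc)
qed

lemma choose_three_le_cube: "real (n choose 3) \<le> real n ^ 3 / 6"
proof (cases "n \<ge> 2")
  case True
  then have "real n * (real n - 1) * (real n - 2) \<le> real n * real n * real n"
    by (intro mult_mono) auto
  then show ?thesis
    by (simp add: real_choose_three power3_eq_cube)
next
  case False
  then have "n = 0 \<or> n = 1" by auto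
  then show ?thesis by (auto simp: binomial_eq_0)
qed

lemma cube_over_choose_three_tendsto:
  "((\<lambda>n. (real n + c) ^ 3 / real (n choose 3)) \<longlongrightarrow> 6) sequentially"
proof -
  have "((\<lambda>n. 6 * (1 + c / real n) ^ 3 / ((1 - 1 / real n) * (1 - 2 / real n)))
          \<longlongrightarrow> 6 * (1 + 0) ^ 3 / ((1 - 0) * (1 - 0))) sequentially"
    by (intro tendsto_intros lim_const_over_n) auto
  moreover have "\<forall>\<^sub>F n in sequentially.
      6 * (1 + c / real n) ^ 3 / ((1 - 1 / real n) * (1 - 2 / real n)) = (real n + c) ^ 3 / real (n choose 3)"
    using eventually_gt_at_top[of 2]
  proof eventually_elim
    case (elim n)
    have "real n + c = real n * (1 + c / real n)"
      and "real n * (real n - 1) * (real n - 2) = real n ^ 3 * ((1 - 1 / real n) * (1 - 2 / real n))"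
      using elim by (simp_all add: field_simps power3_eq_cube)
    then show ?case
      using elim by (simp add: real_choose_three power_mult_distrib)
  qed
  ultimately show ?thesis
    using tendsto_cong by fastforce
qed

lemma card_le_ex_tight_path:
  assumes "hypergraph3 n E" and "\<not> contains_tight_path s E"
  shows "card E \<le> ex_tight_path n s"
proof -
  have "{card E | E. hypergraph3 n E \<and> \<not> contains_tight_path s E} \<subseteq> card ` Pow (Pow {0..<n})"
    unfolding hypergraph3_def by auto
  then have "finite {card E | E. hypergraph3 n E \<and> \<not> contains_tight_path s E}"
    by (rule finite_subset) simp
  then show ?thesis
    unfolding ex_tight_path_def using assms by (intro Max_ge) auto
qed

lemma mono_on_double_step_repeats:
  fixes g :: "nat \<Rightarrow> nat"
  assumes "mono_on {..2*k} g" and "g (2*k) < g 0 + k"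
  shows "\<exists>j. j + 2 \<le> 2*k \<and> g j = g (j + 2)"
proof (rule ccontr)
  assume "\<nexists>j. j + 2 \<le> 2*k \<and> g j = g (j + 2)"
  then have increase: "g j < g (j + 2)" if "j + 2 \<le> 2*k" for j
    using mono_onD[OF assms(1), of j "j + 2"] that by fastforce
  have "g 0 + i \<le> g (2*i)" if "i \<le> k" for i
    using that
  proof (induction i)
    case (Suc i)
    then show ?case using increase[of "2*i"] by simp
  qed simp
  from this[of k] assms(2) show False by simp
qed

definition crossing_triples :: "nat \<Rightarrow> nat \<Rightarrow> nat set set" where
  "crossing_triples n L =
     {e. e \<subseteq> {0..<n} \<and> card e = 3 \<and> (\<exists>x\<in>e. \<exists>y\<in>e. x div L \<noteq> y div L)}"

lemma hypergraph3_crossing_triples: "hypergraph3 n (crossing_triples n L)"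
  unfolding hypergraph3_def crossing_triples_def by auto

lemma crossing_triples_tight_path_free:
  assumes "k \<ge> 1" and "n \<le> k * L"
  shows "\<not> contains_tight_path (2*k + 1) (crossing_triples n L)"
proof
  assume "contains_tight_path (2*k + 1) (crossing_triples n L)"
  then obtain f where f_mono: "strict_mono_on {0..<2*k + 1} f"
    and f_edge: "\<And>j. j + 2 < 2*k + 1 \<Longrightarrow> {f j, f (j+1), f (j+2)} \<in> crossing_triples n L"
    unfolding contains_tight_path_def by blast
  define g where "g i = f i div L" for i
  have g_mono: "mono_on {..2*k} g"
    unfolding g_def using f_mono
    by (intro mono_onI div_le_mono) (auto intro: strict_mono_on_leD)
  obtain m where "k = m + 1"
    using assms(1) by (metis le_add_diff_inverse2)
  then have "{f (2*m), f (2*m + 1), f (2*k)} \<in> crossing_triples n L"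
    using f_edge[of "2*m"] by simp
  then have "f (2*k) < n"
    unfolding crossing_triples_def by auto
  then have "g (2*k) < k"
    unfolding g_def using assms(2) by (simp add: less_mult_imp_div_less mult.commute)
  then obtain j where j: "j + 2 \<le> 2*k" "g j = g (j + 2)"
    using mono_on_double_step_repeats[OF g_mono] by fastforce
  moreover have "g j \<le> g (j + 1)" "g (j + 1) \<le> g (j + 2)"
    using mono_onD[OF g_mono] j(1) by auto
  ultimately have "g j = g (j + 1)" "g (j + 1) = g (j + 2)" by auto
  moreover have "{f j, f (j+1), f (j+2)} \<in> crossing_triples n L"
    using f_edge j(1) by simp
  ultimately show False
    unfolding crossing_triples_def g_def by auto
qed

lemma card_crossing_triples:
  assumes "n \<le> k * L"
  shows "n choose 3 \<le> card (crossing_triples n L) + k * (L choose 3)"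
proof -
  define block_triples where "block_triples i = {e. e \<subseteq> {i*L..<(i+1)*L} \<and> card e = 3}" for i
  define T where "T = {e. e \<subseteq> {0..<n} \<and> card e = 3}"
  have "T \<subseteq> crossing_triples n L \<union> (\<Union>i<k. block_triples i)"
  proof
    fix e assume "e \<in> T"
    show "e \<in> crossing_triples n L \<union> (\<Union>i<k. block_triples i)"
    proof (cases "e \<in> crossing_triples n L")
      case False
      from \<open>e \<in> T\<close> have "e \<noteq> {}" and e_sub: "e \<subseteq> {0..<n}" and "card e = 3"
        unfolding T_def by auto
      then obtain x where "x \<in> e" by blast
      with e_sub have "x < n" by auto
      have same_block: "y div L = x div L" if "y \<in> e" for y
        using False e_sub \<open>card e = 3\<close> \<open>x \<in> e\<close> that unfolding crossing_triples_def by blast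
      have L: "L > 0"
        using \<open>x < n\<close> assms by (cases "L = 0") auto
      have "x div L < k"
        using \<open>x < n\<close> assms by (simp add: less_mult_imp_div_less mult.commute)
      moreover have "e \<subseteq> {x div L * L..<(x div L + 1) * L}"
      proof
        fix y assume "y \<in> e"
        then show "y \<in> {x div L * L..<(x div L + 1) * L}"
          using same_block[of y] div_times_less_eq_dividend[of y L] dividend_less_div_times[OF L, of y]
          by simp
      qed
      then have "e \<in> block_triples (x div L)"
        using \<open>card e = 3\<close> unfolding block_triples_def by simp
      ultimately show ?thesis by blast
    qed simp
  qed
  moreover have "finite (crossing_triples n L)"
    by (rule finite_subset[of _ "Pow {0..<n}"]) (auto simp: crossing_triples_def)
  moreover have "finite (block_triples i)" for i
    by (rule finite_subset[of _ "Pow {i*L..<(i+1)*L}"]) (auto simp: block_triples_def)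
  ultimately have "card T \<le> card (crossing_triples n L \<union> (\<Union>i<k. block_triples i))"
    by (intro card_mono) auto
  also have "\<dots> \<le> card (crossing_triples n L) + card (\<Union>i<k. block_triples i)"
    by (rule card_Un_le)
  also have "card (\<Union>i<k. block_triples i) \<le> (\<Sum>i<k. card (block_triples i))"
    by (rule card_UN_le) simp
  also have "\<dots> = k * (L choose 3)"
    by (simp add: block_triples_def n_subsets)
  finally show ?thesis
    by (simp add: T_def n_subsets)
qed

lemma ex_tight_path_odd_ge:
  assumes "k \<ge> 1"
  shows "real (n choose 3) - (real n + real k) ^ 3 / (6 * real k ^ 2) \<le> real (ex_tight_path n (2*k + 1))"
proof -
  define L where "L = n div k + 1"
  have nL: "n \<le> k * L" and kL: "real k * real L \<le> real n + real k"
    unfolding L_def using div_times_less_eq_dividend[of n k] dividend_less_div_times[of k n] assms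
    by (simp_all add: algebra_simps flip: of_nat_mult of_nat_add)
  have "card (crossing_triples n L) \<le> ex_tight_path n (2*k + 1)"
    using hypergraph3_crossing_triples crossing_triples_tight_path_free[OF assms nL]
    by (rule card_le_ex_tight_path)
  with card_crossing_triples[OF nL]
  have "n choose 3 \<le> ex_tight_path n (2*k + 1) + k * (L choose 3)"
    by linarith
  then have "real (n choose 3) \<le> real (ex_tight_path n (2*k + 1)) + real k * real (L choose 3)"
    by (metis of_nat_add of_nat_le_iff of_nat_mult)
  moreover have "real k * real (L choose 3) \<le> (real n + real k) ^ 3 / (6 * real k ^ 2)"
  proof -
    have "real k * real (L choose 3) \<le> real k * (real L ^ 3 / 6)"
      by (intro mult_left_mono choose_three_le_cube) simp
    also have "\<dots> = (real k * real L) ^ 3 / (6 * real k ^ 2)"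
      using assms by (simp add: field_simps power3_eq_cube power2_eq_square)
    also have "\<dots> \<le> (real n + real k) ^ 3 / (6 * real k ^ 2)"
      using kL by (intro divide_right_mono power_mono) auto
    finally show ?thesis .
  qed
  ultimately show ?thesis by linarith
qed

theorem corollary4p3:
  fixes s :: nat
  assumes "s \<ge> 3" and "odd s"
  shows "\<forall>\<epsilon>>0. \<forall>\<^sub>F n in sequentially.
           real (ex_tight_path n s)
             \<ge> (1 - 4 / (real s - 1)^2 - \<epsilon>) * real (n choose 3)"
proof (intro allI impI)
  fix \<epsilon> :: real assume "\<epsilon> > 0"
  from assms(2) obtain k where s: "s = 2*k + 1" by (rule oddE)
  with assms(1) have k: "k \<ge> 1" by simp
  have ks: "4 / (real s - 1)^2 = 1 / real k ^ 2"
    using s by (simp add: power2_eq_square)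
  have "6 < 6 + 6 * \<epsilon> * real k ^ 2"
    using \<open>\<epsilon> > 0\<close> k by simp
  then have "\<forall>\<^sub>F n in sequentially. (real n + real k) ^ 3 / real (n choose 3) < 6 + 6 * \<epsilon> * real k ^ 2"
    by (rule order_tendstoD(2)[OF cube_over_choose_three_tendsto])
  with eventually_ge_at_top[of 3]
  show "\<forall>\<^sub>F n in sequentially. real (ex_tight_path n s) \<ge> (1 - 4 / (real s - 1)^2 - \<epsilon>) * real (n choose 3)"
  proof eventually_elim
    case (elim n)
    then have "(real n + real k) ^ 3 < (6 + 6 * \<epsilon> * real k ^ 2) * real (n choose 3)"
      by (simp add: divide_less_eq)
    then have "(real n + real k) ^ 3 / (6 * real k ^ 2)
        < (6 + 6 * \<epsilon> * real k ^ 2) * real (n choose 3) / (6 * real k ^ 2)"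
      using k by (intro divide_strict_right_mono) auto
    also have "\<dots> = (1 / real k ^ 2 + \<epsilon>) * real (n choose 3)"
      using k by (simp add: field_simps)
    finally show ?case
      using ex_tight_path_odd_ge[OF k, of n] unfolding ks s by (simp add: algebra_simps)
  qed
qed
end
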